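(* Let $p\ge 0$. Then for all $r\in(0,1)$, $$2^{1+p}K(1/2)\,(r-r^2)^p\le (1-r)^pK(1-r)+r^pK(r).$$
   Context: $K(x)={\cal K}(\sqrt x)=\frac\pi2\,{}_2F_1(1/2,1/2;1;x)$ for $x\in[0,1)$, where ${\cal K}(r)=\int_0^{\pi/2}(1-r^2\sin^2t)^{-1/2}dt$ is the complete elliptic integral of the first kind. *)

theory Defs
  imports "HOL-Analysis.Analysis"
begin

definition ellipK :: "real \<Rightarrow> real" where
  "ellipK r = integral {0..pi/2} (\<lambda>t. 1 / sqrt (1 - r\<^sup>2 * (sin t)\<^sup>2))"

text \<open>K(x) = ellipK(sqrt x), parameter convention, for x in [0,1).\<close>
definition K :: "real \<Rightarrow> real" where
  "K x = ellipK (sqrt x)"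

end

theory Submission
  imports Defs
begin

text \<open>
  Since K x is the integral over [0, pi/2] of (1 - x s)^(-1/2) with s = sin^2 t, it suffices
  to prove the inequality pointwise in s. Put A = (1-r)^p, B = r^p, u = (1 - (1-r) s)^(-1/2),
  v = (1 - r s)^(-1/2). AM-GM together with r (1-r) <= 1/4 gives 2^(1+p) (r - r^2)^p <= A + B;
  convexity of y^(-1/2) gives (1 - s/2)^(-1/2) <= (u + v)/2; and A - B, u - v have the same
  sign (both are decided by r <= 1/2), so Chebyshev's inequality gives (A + B)(u + v)/2 <= A u + B v.
\<close>

lemma powr_weights_ge:
  fixes a b p :: real
  assumes "p \<ge> 0" "0 < a" "0 < b" "a + b = 1"
  shows "2 powr (1 + p) * (a * b) powr p \<le> a powr p + b powr p"
proof -
  define g where "g = (a * b) powr (p/2)"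
  have "4 * (a * b) \<le> (a + b)\<^sup>2"
    using sum_squares_ge_zero[of "a - b" 0] by (simp add: power2_eq_square algebra_simps)
  hence "4 * (a * b) \<le> 1"
    using assms(4) by simp
  hence "g \<le> (1/4) powr (p/2)"
    unfolding g_def using assms by (intro powr_mono2) auto
  also have "\<dots> = 1 / 2 powr p"
    by (simp add: powr_divide powr_powr flip: powr_mult_base[of 2])
  finally have "2 powr p * g \<le> 1"
    by (simp add: field_simps)
  have "(a * b) powr p = g * g"
    unfolding g_def by (simp flip: powr_add)
  hence "2 powr (1 + p) * (a * b) powr p = 2 * g * (2 powr p * g)"
    by (simp add: powr_add)
  also have "\<dots> \<le> 2 * g"
    using \<open>2 powr p * g \<le> 1\<close> by (intro mult_left_le) (auto simp: g_def)
  also have "\<dots> = 2 * sqrt (a powr p * b powr p)"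
    using assms by (simp add: g_def powr_half_sqrt[symmetric] powr_powr powr_mult)
  also have "\<dots> \<le> a powr p + b powr p"
    using arith_geo_mean_sqrt[of "a powr p" "b powr p"] by simp
  finally show ?thesis .
qed

lemma inverse_sqrt_midpoint_le:
  fixes u v :: real
  assumes "0 < u" "0 < v"
  shows "2 / sqrt ((u + v) / 2) \<le> 1 / sqrt u + 1 / sqrt v"
proof -
  define x y where "x = sqrt u" and "y = sqrt v"
  have "x > 0" "y > 0"
    using assms by (auto simp: x_def y_def)
  have uv: "u = x\<^sup>2" "v = y\<^sup>2"
    using assms by (simp_all add: x_def y_def)
  have "(x + y)\<^sup>2 \<le> 4 * ((x\<^sup>2 + y\<^sup>2) / 2)"
    using sum_squares_ge_zero[of "x - y" 0] by (simp add: power2_eq_square algebra_simps)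
  hence "x + y \<le> 2 * sqrt ((u + v) / 2)"
    using \<open>x > 0\<close> \<open>y > 0\<close> unfolding uv
    by (metis real_le_rsqrt real_sqrt_four real_sqrt_mult)
  hence "2 / sqrt ((u + v) / 2) \<le> 4 / (x + y)"
    using assms \<open>x > 0\<close> \<open>y > 0\<close> by (simp add: divide_simps mult.commute)
  also have "\<dots> \<le> 1 / x + 1 / y"
    using \<open>x > 0\<close> \<open>y > 0\<close> sum_squares_ge_zero[of "x - y" 0]
    by (simp add: divide_simps power2_eq_square algebra_simps)
  finally show ?thesis
    by (simp add: x_def y_def)
qed

lemma inverse_sqrt_one_minus_mono:
  fixes a b s :: real
  assumes "0 \<le> s" "s \<le> 1" "a \<le> b" "b < 1"
  shows "1 / sqrt (1 - a * s) \<le> 1 / sqrt (1 - b * s)"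
proof -
  have "b * s \<le> max b 0"
    using assms by (cases "b \<le> 0") (auto simp: mult_nonpos_nonneg mult_left_le)
  hence "b * s < 1"
    using assms by linarith
  moreover have "b * s \<ge> a * s"
    using assms by (simp add: mult_right_mono)
  ultimately show ?thesis
    by (intro divide_left_mono) auto
qed

lemma chebyshev_two:
  fixes A B u v :: real
  assumes "0 \<le> (A - B) * (u - v)"
  shows "(A + B) * ((u + v) / 2) \<le> A * u + B * v"
  using assms by (simp add: algebra_simps)

definition K_integrand :: "real \<Rightarrow> real \<Rightarrow> real" where
  "K_integrand x t = 1 / sqrt (1 - x * (sin t)\<^sup>2)"

lemma K_eq_integral:
  fixes x :: real
  assumes "0 \<le> x"
  shows "K x = integral {0..pi/2} (K_integrand x)"
  using assms by (simp add: K_def ellipK_def K_integrand_def[abs_def])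

lemma K_integrand_integrable:
  fixes x :: real
  assumes "x < 1"
  shows "K_integrand x integrable_on {0..pi/2}"
proof -
  have "x * (sin t)\<^sup>2 < 1" for t
  proof -
    have "(sin t)\<^sup>2 \<le> 1"
      by (simp add: abs_sin_le_one abs_square_le_1)
    hence "x * (sin t)\<^sup>2 \<le> max x 0"
      by (cases "x \<le> 0") (auto simp: mult_nonpos_nonneg mult_left_le)
    thus ?thesis
      using assms by linarith
  qed
  hence "continuous_on {0..pi/2} (K_integrand x)"
    unfolding K_integrand_def by (intro continuous_intros) (auto simp: less_imp_neq[symmetric])
  thus ?thesis
    by (rule integrable_continuous_interval)
qed

lemma K_integrand_weighted_le:
  fixes p r t :: real
  assumes "p \<ge> 0" "0 < r" "r < 1"
  shows "2 powr (1 + p) * (r - r\<^sup>2) powr p * K_integrand (1/2) t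
           \<le> (1 - r) powr p * K_integrand (1 - r) t + r powr p * K_integrand r t"
proof -
  define s where "s = (sin t)\<^sup>2"
  have s: "0 \<le> s" "s \<le> 1"
    by (simp_all add: s_def abs_sin_le_one abs_square_le_1)
  define A B where "A = (1 - r) powr p" and "B = r powr p"
  define u v where "u = K_integrand (1 - r) t" and "v = K_integrand r t"
  have "(1 - r) * s \<le> 1 - r" "r * s \<le> r"
    using s assms by (simp_all add: mult_left_le)
  hence pos: "0 < 1 - (1 - r) * s" "0 < 1 - r * s"
    using assms by linarith+
  have "0 \<le> (A - B) * (u - v)"
  proof (cases "r \<le> 1/2")
    case True
    have "B \<le> A" "v \<le> u"
      using assms s True unfolding A_def B_def u_def v_def K_integrand_def s_def[symmetric]
      by (auto intro!: powr_mono2 inverse_sqrt_one_minus_mono)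
    thus ?thesis by simp
  next
    case False
    have "A \<le> B" "u \<le> v"
      using assms s False unfolding A_def B_def u_def v_def K_integrand_def s_def[symmetric]
      by (auto intro!: powr_mono2 inverse_sqrt_one_minus_mono)
    thus ?thesis by (simp add: mult_nonpos_nonpos)
  qed
  have "r - r\<^sup>2 = (1 - r) * r"
    by (simp add: power2_eq_square algebra_simps)
  hence "2 powr (1 + p) * (r - r\<^sup>2) powr p \<le> A + B"
    unfolding A_def B_def using assms powr_weights_ge[of p "1 - r" r] by simp
  moreover have "K_integrand (1/2) t \<le> (u + v) / 2"
    using inverse_sqrt_midpoint_le[OF pos]
    by (simp add: u_def v_def K_integrand_def s_def[symmetric] field_simps)
  ultimately have "2 powr (1 + p) * (r - r\<^sup>2) powr p * K_integrand (1/2) t \<le> (A + B) * ((u + v) / 2)"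
    using s by (intro mult_mono) (auto simp: A_def B_def K_integrand_def s_def[symmetric])
  also have "\<dots> \<le> A * u + B * v"
    by (rule chebyshev_two) fact
  finally show ?thesis
    by (simp add: A_def B_def u_def v_def)
qed

theorem mainTheorem14:
  fixes p r :: real
  assumes "p \<ge> 0" and "0 < r" and "r < 1"
  shows "2 powr (1 + p) * K (1/2) * (r - r\<^sup>2) powr p
           \<le> (1 - r) powr p * K (1 - r) + r powr p * K r"
proof -
  let ?c = "2 powr (1 + p) * (r - r\<^sup>2) powr p"
  have int: "K_integrand (1/2) integrable_on {0..pi/2}" "K_integrand (1 - r) integrable_on {0..pi/2}"
    "K_integrand r integrable_on {0..pi/2}"
    using assms by (simp_all add: K_integrand_integrable)
  have "2 powr (1 + p) * K (1/2) * (r - r\<^sup>2) powr p = integral {0..pi/2} (\<lambda>t. ?c * K_integrand (1/2) t)"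
    by (simp add: K_eq_integral mult_ac)
  also have "\<dots> \<le> integral {0..pi/2} (\<lambda>t. (1 - r) powr p * K_integrand (1 - r) t + r powr p * K_integrand r t)"
    using int by (intro integral_le integrable_add integrable_on_mult_right K_integrand_weighted_le assms)
  also have "\<dots> = (1 - r) powr p * K (1 - r) + r powr p * K r"
    using int assms by (simp add: K_eq_integral integral_add integrable_on_mult_right)
  finally show ?thesis .
qed

end
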